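(* Suppose that $S_N$ admits the weak global Edgeworth expansion of order $0$ for all $f\in F^1_0$, with leading polynomial $P_{0,g}\equiv1$ and asymptotic mean $A=0$, i.e. $\mathbb{E}(f(S_N))=\int\mathfrak{n}(z)f(z\sqrt{N})\,dz+C^1_0(f)\,o(N^{-1/2})$ with the $o$-term independent of $f$. Let $(u_N)$ be a real sequence with $\lim_{N\to\infty}u_N/\sqrt{N}=u$. Then for all $a<b$, $$\lim_{N\to\infty}\frac{\sqrt{N}}{b-a}\,\mathbb{P}\big(S_N\in(u_N+a,u_N+b)\big)=\frac{1}{\sqrt{2\pi\sigma^2}}e^{-\frac{u^2}{2\sigma^2}}.$$
   Context: $X_1,X_2,\dots$ are real random variables, $S_N=\sum_{n=1}^N X_n$, $\sigma^2>0$, $\mathfrak{n}(y)=\frac{1}{\sqrt{2\pi\sigma^2}}e^{-y^2/(2\sigma^2)}$. $F^1_0$ is the space of continuously differentiable $f:\mathbb{R}\to\mathbb{C}$ with $C^1_0(f)=\max(\|f\|_{L^1},\|f'\|_{L^1})+\|f\|_{L^1}<\infty$. The asymptotic mean $A=\lim_N\mathbb{E}(S_N/N)$ is assumed to be $0$. *)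

theory Defs
  imports "HOL-Probability.Probability"
begin

definition normal_dens :: "real \<Rightarrow> real \<Rightarrow> real" where
  "normal_dens sigma2 y = exp (- y\<^sup>2 / (2 * sigma2)) / sqrt (2 * pi * sigma2)"

definition F10 :: "(real \<Rightarrow> complex) \<Rightarrow> bool" where
  "F10 f \<longleftrightarrow> (\<forall>x. f differentiable (at x))
     \<and> continuous_on UNIV (\<lambda>x. vector_derivative f (at x))
     \<and> integrable lborel f
     \<and> integrable lborel (\<lambda>x. vector_derivative f (at x))"

definition C10 :: "(real \<Rightarrow> complex) \<Rightarrow> real" where
  "C10 f = max (\<integral>x. norm (f x) \<partial>lborel) (\<integral>x. norm (vector_derivative f (at x)) \<partial>lborel)
           + (\<integral>x. norm (f x) \<partial>lborel)"

end

theory Submission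
  imports Defs "HOL-Real_Asymp.Real_Asymp"
begin

text \<open>
  Squeeze the indicator of (a, b) between two C^1 bumps G <= 1_(a,b) <= H whose integrals
  differ from b - a by at most 2e. For a C^1 function G with G, G' integrable, every translate
  G(. - v) lies in F^1_0 with the same constant C^1_0, so the Edgeworth expansion gives
  sqrt N E G(S_N - u_N) = sqrt N \<integral> n(z) G(z sqrt N - u_N) dz + o(1). Substituting
  x = z sqrt N - u_N turns the main term into \<integral> n((x + u_N) / sqrt N) G(x) dx, which tends
  to n(u) \<integral> G by dominated convergence. Letting e tend to 0 gives the local limit for intervals.
\<close>

lemma DERIV_comp_max:
  fixes g :: "real \<Rightarrow> real"
  assumes g: "\<And>s. (g has_real_derivative g' s) (at s)" and "g' c = 0"
  shows "((\<lambda>t. g (max c t)) has_real_derivative g' (max c t)) (at t)"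
proof -
  consider "t < c" | "t = c" | "t > c" by linarith
  then show ?thesis
  proof cases
    case 1
    then have "eventually (\<lambda>y. g (max c y) = g c) (nhds t)"
      using eventually_nhds_in_open[of "{..<c}" t] by (auto elim: eventually_mono)
    then show ?thesis
      using 1 \<open>g' c = 0\<close> by (subst DERIV_cong_ev[OF refl _ refl]) auto
  next
    case 3
    then have "eventually (\<lambda>y. g (max c y) = g y) (nhds t)"
      using eventually_nhds_in_open[of "{c<..}" t] by (auto elim: eventually_mono)
    then show ?thesis
      using 3 g by (subst DERIV_cong_ev[OF refl _ refl]) auto
  next
    case 2
    have "((\<lambda>t. g (max c t)) has_real_derivative g' c) (at_left c)"
      by (subst has_field_derivative_cong_eventually[where g="\<lambda>_. g c"])
         (auto simp: eventually_at_filter \<open>g' c = 0\<close>)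
    moreover have "((\<lambda>t. g (max c t)) has_real_derivative g' c) (at_right c)"
      by (subst has_field_derivative_cong_eventually[where g=g])
         (auto simp: eventually_at_filter intro: has_field_derivative_at_within g)
    ultimately show ?thesis
      using 2 by (simp add: has_field_derivative_iff filterlim_at_split)
  qed
qed

lemma DERIV_comp_min:
  fixes g :: "real \<Rightarrow> real"
  assumes g: "\<And>s. (g has_real_derivative g' s) (at s)" and "g' c = 0"
  shows "((\<lambda>t. g (min c t)) has_real_derivative g' (min c t)) (at t)"
proof -
  have "((\<lambda>s. g (- s)) has_real_derivative - g' (- s)) (at s)" for s
    using DERIV_mirror g by blast
  from DERIV_comp_max[OF this, of "- c" "- t"] \<open>g' c = 0\<close>
  have "((\<lambda>s. g (- max (- c) s)) has_real_derivative - g' (min c t)) (at (- t))"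
    by (simp add: minus_max_eq_min)
  then show ?thesis
    by (simp add: DERIV_mirror minus_max_eq_min)
qed

text \<open>
  The cubic 3s^2 - 2s^3 has vanishing derivative at 0 and 1, so clamping its argument
  to [0, 1] keeps it C^1.
\<close>

definition smooth_step :: "real \<Rightarrow> real" where
  "smooth_step t = (let s = min 1 (max 0 t) in s\<^sup>2 * (3 - 2 * s))"

definition smooth_step' :: "real \<Rightarrow> real" where
  "smooth_step' t = (let s = min 1 (max 0 t) in 6 * s * (1 - s))"

lemma smooth_step_has_derivative: "(smooth_step has_real_derivative smooth_step' t) (at t)"
proof -
  have cubic: "((\<lambda>s. s\<^sup>2 * (3 - 2 * s)) has_real_derivative 6 * s * (1 - s)) (at s)" for s :: real
    by (auto intro!: derivative_eq_intros simp: algebra_simps power2_eq_square)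
  have "((\<lambda>s. (min 1 s)\<^sup>2 * (3 - 2 * min 1 s)) has_real_derivative 6 * min 1 s * (1 - min 1 s)) (at s)"
    for s :: real
    by (rule DERIV_comp_min[OF cubic]) simp
  from DERIV_comp_max[OF this, of 0 t] show ?thesis
    by (simp add: smooth_step_def[abs_def] smooth_step'_def Let_def)
qed

lemma isCont_smooth_step': "isCont smooth_step' t"
  unfolding smooth_step'_def[abs_def] Let_def by (intro continuous_intros)

lemma smooth_step_eq_0: "t \<le> 0 \<Longrightarrow> smooth_step t = 0"
  and smooth_step'_eq_0: "t \<le> 0 \<Longrightarrow> smooth_step' t = 0"
  and smooth_step_eq_1: "1 \<le> t \<Longrightarrow> smooth_step t = 1"
  by (simp_all add: smooth_step_def smooth_step'_def)

lemma smooth_step_nonneg: "0 \<le> smooth_step t"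
  and smooth_step_le_1: "smooth_step t \<le> 1"
proof -
  define s where "s = min 1 (max 0 t)"
  have s: "0 \<le> s" "s \<le> 1" by (auto simp: s_def)
  have "1 - s\<^sup>2 * (3 - 2 * s) = (1 - s)\<^sup>2 * (1 + 2 * s)"
    by (simp add: algebra_simps power2_eq_square)
  moreover have "0 \<le> (1 - s)\<^sup>2 * (1 + 2 * s)" using s by simp
  ultimately have "s\<^sup>2 * (3 - 2 * s) \<le> 1" by linarith
  moreover have "0 \<le> s\<^sup>2 * (3 - 2 * s)" using s by simp
  ultimately show "0 \<le> smooth_step t" "smooth_step t \<le> 1"
    by (simp_all add: smooth_step_def s_def[symmetric])
qed

definition bump :: "real \<Rightarrow> real \<Rightarrow> real \<Rightarrow> real \<Rightarrow> real" where
  "bump c d e x = smooth_step ((x - c) / e) * smooth_step ((d - x) / e)"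

definition bump' :: "real \<Rightarrow> real \<Rightarrow> real \<Rightarrow> real \<Rightarrow> real" where
  "bump' c d e x = (smooth_step' ((x - c) / e) * smooth_step ((d - x) / e)
                    - smooth_step ((x - c) / e) * smooth_step' ((d - x) / e)) / e"

lemma bump_has_derivative:
  assumes "0 < e"
  shows "(bump c d e has_real_derivative bump' c d e x) (at x)"
proof -
  have "((\<lambda>x. (x - c) / e) has_real_derivative 1 / e) (at x)"
    and "((\<lambda>x. (d - x) / e) has_real_derivative - 1 / e) (at x)"
    using assms by (auto intro!: derivative_eq_intros)
  from DERIV_mult[OF DERIV_chain2[OF smooth_step_has_derivative this(1)]
                     DERIV_chain2[OF smooth_step_has_derivative this(2)]]
  show ?thesis
    unfolding bump_def[abs_def] bump'_def by (simp add: algebra_simps diff_divide_distrib)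
qed

lemma isCont_bump': "0 < e \<Longrightarrow> isCont (bump' c d e) x"
  unfolding bump'_def[abs_def]
  by (intro continuous_intros isCont_o2[OF _ isCont_smooth_step']
      isCont_o2[OF _ DERIV_isCont[OF smooth_step_has_derivative]]) auto

lemma bump_eq_0: "0 < e \<Longrightarrow> x \<notin> {c<..<d} \<Longrightarrow> bump c d e x = 0"
  and bump'_eq_0: "0 < e \<Longrightarrow> x \<notin> {c..d} \<Longrightarrow> bump' c d e x = 0"
  by (auto simp: bump_def bump'_def smooth_step_eq_0 smooth_step'_eq_0 divide_nonpos_pos not_less)

lemma bump_eq_1: "0 < e \<Longrightarrow> x \<in> {c + e..d - e} \<Longrightarrow> bump c d e x = 1"
  by (simp add: bump_def smooth_step_eq_1)

lemma bump_nonneg: "0 \<le> bump c d e x"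
  and bump_le_1: "bump c d e x \<le> 1"
  by (simp_all add: bump_def smooth_step_nonneg smooth_step_le_1 mult_le_one)

lemma integrable_lborel_vanishing_outside:
  fixes G :: "real \<Rightarrow> 'b::{banach, second_countable_topology}"
  assumes "continuous_on {c..d} G" and "\<And>x. x \<notin> {c..d} \<Longrightarrow> G x = 0"
  shows "integrable lborel G"
proof -
  have "integrable lborel (\<lambda>x. indicator {c..d} x *\<^sub>R G x)"
    using assms(1) by (intro borel_integrable_compact) auto
  also have "(\<lambda>x. indicator {c..d} x *\<^sub>R G x) = G"
    using assms(2) by (auto simp: fun_eq_iff split: split_indicator)
  finally show ?thesis .
qed

lemma bump_le_indicator: "0 < e \<Longrightarrow> bump c d e x \<le> indicator {c<..<d} x"
  using bump_eq_0[of e x c d] bump_le_1[of c d e x] by (auto split: split_indicator)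

lemma indicator_le_bump: "0 < e \<Longrightarrow> indicator {c<..<d} x \<le> bump (c - e) (d + e) e x"
  using bump_eq_1[of e x "c - e" "d + e"] bump_nonneg[of "c - e" "d + e" e x]
  by (auto split: split_indicator)

lemma continuous_on_bump: "0 < e \<Longrightarrow> continuous_on UNIV (bump c d e)"
  using bump_has_derivative by (intro continuous_at_imp_continuous_on ballI DERIV_isCont)

lemma borel_measurable_bump[measurable]: "0 < e \<Longrightarrow> bump c d e \<in> borel_measurable borel"
  by (rule borel_measurable_continuous_onI[OF continuous_on_bump])

lemma integrable_bump: "0 < e \<Longrightarrow> integrable lborel (bump c d e)"
  using continuous_on_bump
  by (intro integrable_lborel_vanishing_outside[of c d]) (auto intro: bump_eq_0 continuous_on_subset)

lemma integrable_bump': "0 < e \<Longrightarrow> integrable lborel (bump' c d e)"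
  using isCont_bump'
  by (intro integrable_lborel_vanishing_outside[of c d] continuous_at_imp_continuous_on)
     (auto intro: bump'_eq_0)

lemma bump_integral_ge:
  assumes "0 < e"
  shows "d - c - 2 * e \<le> (\<integral>x. bump c d e x \<partial>lborel)"
proof -
  have "d - c - 2 * e \<le> (\<integral>x. indicator {c + e..d - e} x \<partial>lborel)"
    by simp
  also have "\<dots> \<le> (\<integral>x. bump c d e x \<partial>lborel)"
    using assms bump_eq_1[OF assms] bump_nonneg
    by (intro integral_mono integrable_bump integrable_real_indicator)
       (auto split: split_indicator simp: emeasure_lborel_Icc_eq)
  finally show ?thesis .
qed

lemma bump_integral_le:
  assumes "0 < e" and "c \<le> d"
  shows "(\<integral>x. bump c d e x \<partial>lborel) \<le> d - c"
proof -
  have "(\<integral>x. bump c d e x \<partial>lborel) \<le> (\<integral>x. indicator {c<..<d} x \<partial>lborel)"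
    using assms bump_le_indicator
    by (intro integral_mono integrable_bump integrable_real_indicator) auto
  also have "\<dots> = d - c"
    using assms by simp
  finally show ?thesis .
qed

lemma has_vector_derivative_translate_of_real:
  fixes G :: "real \<Rightarrow> real"
  assumes "\<And>x. (G has_real_derivative G' x) (at x)"
  shows "((\<lambda>x. complex_of_real (G (x - v))) has_vector_derivative complex_of_real (G' (x - v))) (at x)"
proof (rule has_vector_derivative_of_real)
  have "((\<lambda>x. x - v) has_real_derivative 1) (at x)"
    by (auto intro!: derivative_eq_intros)
  from DERIV_chain2[OF assms this] show "((\<lambda>x. G (x - v)) has_real_derivative G' (x - v)) (at x)"
    by simp
qed

lemma vector_derivative_translate_of_real:
  fixes G :: "real \<Rightarrow> real"
  assumes "\<And>x. (G has_real_derivative G' x) (at x)"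
  shows "vector_derivative (\<lambda>x. complex_of_real (G (x - v))) (at x) = complex_of_real (G' (x - v))"
  using has_vector_derivative_translate_of_real[OF assms] by (rule vector_derivative_at)

lemma F10_translate_of_real:
  fixes G :: "real \<Rightarrow> real"
  assumes G: "\<And>x. (G has_real_derivative G' x) (at x)" and "continuous_on UNIV G'"
    and "integrable lborel G" and "integrable lborel G'"
  shows "F10 (\<lambda>x. complex_of_real (G (x - v)))"
  unfolding F10_def vector_derivative_translate_of_real[OF G]
proof (intro conjI allI)
  show "(\<lambda>x. complex_of_real (G (x - v))) differentiable at x" for x
    using has_vector_derivative_translate_of_real[OF G] by (rule differentiableI_vector)
  have "continuous_on UNIV (\<lambda>x. G' (x - v))"
    by (rule continuous_on_compose2[OF assms(2)]) (auto intro: continuous_intros)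
  then show "continuous_on UNIV (\<lambda>x. complex_of_real (G' (x - v)))"
    by (rule continuous_on_of_real)
  show "integrable lborel (\<lambda>x. complex_of_real (G (x - v)))"
    "integrable lborel (\<lambda>x. complex_of_real (G' (x - v)))"
    using lborel_integrable_real_affine[OF assms(3), of 1 "- v"]
      lborel_integrable_real_affine[OF assms(4), of 1 "- v"]
    by (auto intro: integrable_of_real)
qed

lemma C10_translate_of_real:
  fixes G :: "real \<Rightarrow> real"
  assumes "\<And>x. (G has_real_derivative G' x) (at x)"
  shows "C10 (\<lambda>x. complex_of_real (G (x - v))) = C10 (\<lambda>x. complex_of_real (G x))"
proof -
  have translate: "(\<integral>x. \<bar>H (x - v)\<bar> \<partial>lborel) = (\<integral>x. \<bar>H x\<bar> \<partial>lborel)" for H :: "real \<Rightarrow> real"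
    by (subst lborel_integral_real_affine[where c=1 and t=v]) simp_all
  show ?thesis
    using vector_derivative_translate_of_real[OF assms, of v] vector_derivative_translate_of_real[OF assms, of 0]
    unfolding C10_def by (simp add: translate)
qed

lemma normal_dens_nonneg: "0 < sigma2 \<Longrightarrow> 0 \<le> normal_dens sigma2 y"
  by (simp add: normal_dens_def)

lemma normal_dens_le: "0 < sigma2 \<Longrightarrow> normal_dens sigma2 y \<le> 1 / sqrt (2 * pi * sigma2)"
  unfolding normal_dens_def by (intro divide_right_mono) auto

lemma isCont_normal_dens: "0 < sigma2 \<Longrightarrow> isCont (normal_dens sigma2) y"
  unfolding normal_dens_def by (intro continuous_intros) auto

lemma lborel_integral_rescale:
  fixes h G :: "real \<Rightarrow> real"
  assumes "0 < s"
  shows "s * (\<integral>z. h z * G (z * s - v) \<partial>lborel) = (\<integral>x. h ((x + v) / s) * G x \<partial>lborel)"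
proof -
  have "(\<integral>z. h z * G (z * s - v) \<partial>lborel)
      = \<bar>1 / s\<bar> *\<^sub>R (\<integral>x. h (v / s + 1 / s * x) * G ((v / s + 1 / s * x) * s - v) \<partial>lborel)"
    using assms by (intro lborel_integral_real_affine) simp
  also have "\<dots> = (\<integral>x. h ((x + v) / s) * G x \<partial>lborel) / s"
    using assms by (simp add: add_divide_distrib distrib_right add.commute)
  finally show ?thesis
    using assms by simp
qed

lemma normal_rescaled_tendsto:
  assumes sigma: "0 < sigma2" and G: "integrable lborel G"
    and v: "(\<lambda>N. v N / sqrt (real N)) \<longlonglongrightarrow> u"
  shows "(\<lambda>N. \<integral>x. normal_dens sigma2 ((x + v N) / sqrt (real N)) * G x \<partial>lborel)
           \<longlonglongrightarrow> (\<integral>x. normal_dens sigma2 u * G x \<partial>lborel)"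
proof (rule integral_dominated_convergence[where w="\<lambda>x. 1 / sqrt (2 * pi * sigma2) * \<bar>G x\<bar>"])
  show "(\<lambda>x. normal_dens sigma2 u * G x) \<in> borel_measurable lborel"
    "(\<lambda>x. normal_dens sigma2 ((x + v N) / sqrt (real N)) * G x) \<in> borel_measurable lborel" for N
    using G unfolding normal_dens_def by measurable
  show "integrable lborel (\<lambda>x. 1 / sqrt (2 * pi * sigma2) * \<bar>G x\<bar>)"
    using G by (intro integrable_mult_right integrable_abs)
  show "AE x in lborel. norm (normal_dens sigma2 ((x + v N) / sqrt (real N)) * G x)
          \<le> 1 / sqrt (2 * pi * sigma2) * \<bar>G x\<bar>" for N
    using mult_right_mono[OF normal_dens_le[OF sigma] abs_ge_zero] normal_dens_nonneg[OF sigma]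
    by (intro AE_I2) (simp add: abs_mult)
  have "(\<lambda>N. (x + v N) / sqrt (real N)) \<longlonglongrightarrow> u" for x
  proof -
    have "(\<lambda>N. x / sqrt (real N)) \<longlonglongrightarrow> 0"
      by real_asymp
    from tendsto_add[OF this v] show ?thesis
      by (simp add: add_divide_distrib)
  qed
  then show "AE x in lborel. (\<lambda>N. normal_dens sigma2 ((x + v N) / sqrt (real N)) * G x)
          \<longlonglongrightarrow> normal_dens sigma2 u * G x"
    by (intro AE_I2 tendsto_mult_right isCont_tendsto_compose[OF isCont_normal_dens[OF sigma]])
qed

definition weak_edgeworth0 :: "'a measure \<Rightarrow> (nat \<Rightarrow> 'a \<Rightarrow> real) \<Rightarrow> real \<Rightarrow> bool" where
  "weak_edgeworth0 M S sigma2 \<longleftrightarrow> (\<exists>r :: nat \<Rightarrow> real. r \<longlonglongrightarrow> 0 \<and>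
     (\<forall>f. F10 f \<longrightarrow> (\<forall>N\<ge>1.
        norm ((\<integral>\<omega>. f (S N \<omega>) \<partial>M)
              - (\<integral>z. complex_of_real (normal_dens sigma2 z) * f (z * sqrt (real N)) \<partial>lborel))
        \<le> C10 f * (r N / sqrt (real N)))))"

lemma weak_edgeworth0_smooth_local_limit:
  fixes G G' :: "real \<Rightarrow> real"
  assumes edgeworth: "weak_edgeworth0 M S sigma2" and sigma: "0 < sigma2"
    and v: "(\<lambda>N. v N / sqrt (real N)) \<longlonglongrightarrow> u"
    and G: "\<And>x. (G has_real_derivative G' x) (at x)" "continuous_on UNIV G'"
      "integrable lborel G" "integrable lborel G'"
  shows "(\<lambda>N. sqrt (real N) * (\<integral>\<omega>. G (S N \<omega> - v N) \<partial>M))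
           \<longlonglongrightarrow> normal_dens sigma2 u * (\<integral>x. G x \<partial>lborel)"
proof -
  obtain r where r: "r \<longlonglongrightarrow> 0" and r_bound: "\<And>f N. F10 f \<Longrightarrow> 1 \<le> N \<Longrightarrow>
      norm ((\<integral>\<omega>. f (S N \<omega>) \<partial>M)
            - (\<integral>z. complex_of_real (normal_dens sigma2 z) * f (z * sqrt (real N)) \<partial>lborel))
      \<le> C10 f * (r N / sqrt (real N))"
    using edgeworth unfolding weak_edgeworth0_def by blast
  define K where "K = C10 (\<lambda>x. complex_of_real (G x))"
  define E where "E N = (\<integral>\<omega>. G (S N \<omega> - v N) \<partial>M)" for N
  define J where "J N = (\<integral>x. normal_dens sigma2 ((x + v N) / sqrt (real N)) * G x \<partial>lborel)" for N
  have error: "\<bar>sqrt (real N) * E N - J N\<bar> \<le> K * r N" if "1 \<le> N" for N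
  proof -
    have sqrt_pos: "0 < sqrt (real N)"
      using that by simp
    define I where "I = (\<integral>z. normal_dens sigma2 z * G (z * sqrt (real N) - v N) \<partial>lborel)"
    have "norm (complex_of_real (E N) - complex_of_real I) \<le> K * (r N / sqrt (real N))"
      using r_bound[OF F10_translate_of_real[OF G, of "v N"] that]
      by (simp add: K_def E_def I_def C10_translate_of_real[OF G(1)] flip: of_real_mult)
    then have "sqrt (real N) * \<bar>E N - I\<bar> \<le> K * r N"
      using sqrt_pos by (simp add: pos_le_divide_eq mult.commute flip: of_real_diff)
    moreover have "sqrt (real N) * E N - J N = sqrt (real N) * (E N - I)"
      using lborel_integral_rescale[OF sqrt_pos, of "normal_dens sigma2" G "v N"]
      by (simp add: J_def I_def right_diff_distrib)
    ultimately show ?thesis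
      using sqrt_pos by (simp add: abs_mult)
  qed
  have "(\<lambda>N. sqrt (real N) * E N - J N) \<longlonglongrightarrow> 0"
  proof (rule Lim_null_comparison)
    show "\<forall>\<^sub>F N in sequentially. norm (sqrt (real N) * E N - J N) \<le> K * r N"
      using eventually_ge_at_top[of 1] by eventually_elim (simp add: error)
    show "(\<lambda>N. K * r N) \<longlonglongrightarrow> 0"
      using tendsto_mult_right_zero[OF r] .
  qed
  moreover have "J \<longlonglongrightarrow> normal_dens sigma2 u * (\<integral>x. G x \<partial>lborel)"
    using normal_rescaled_tendsto[OF sigma G(3) v] by (simp add: J_def[abs_def])
  ultimately have "(\<lambda>N. (sqrt (real N) * E N - J N) + J N) \<longlonglongrightarrow> 0 + normal_dens sigma2 u * (\<integral>x. G x \<partial>lborel)"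
    by (rule tendsto_add)
  then show ?thesis
    by (simp add: E_def)
qed

lemma tendsto_by_approximation:
  fixes x :: "nat \<Rightarrow> real"
  assumes "\<And>\<epsilon>. 0 < \<epsilon> \<Longrightarrow> \<exists>lo hi l h. lo \<longlonglongrightarrow> l \<and> hi \<longlonglongrightarrow> h
             \<and> (\<forall>N. lo N \<le> x N \<and> x N \<le> hi N) \<and> L - \<epsilon> \<le> l \<and> h \<le> L + \<epsilon>"
  shows "x \<longlonglongrightarrow> L"
proof (rule order_tendstoI)
  fix y assume "y < L"
  then obtain lo hi l h where lo: "lo \<longlonglongrightarrow> l" "\<forall>N. lo N \<le> x N" and "L - (L - y) / 2 \<le> l"
    using assms[of "(L - y) / 2"] by auto
  then have "y < l"
    using \<open>y < L\<close> by (simp add: field_simps)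
  from order_tendstoD(1)[OF lo(1) this] show "\<forall>\<^sub>F N in sequentially. y < x N"
    by eventually_elim (use lo(2) in \<open>auto intro: less_le_trans\<close>)
next
  fix y assume "L < y"
  then obtain lo hi l h where hi: "hi \<longlonglongrightarrow> h" "\<forall>N. x N \<le> hi N" and "h \<le> L + (y - L) / 2"
    using assms[of "(y - L) / 2"] by auto
  then have "h < y"
    using \<open>L < y\<close> by (simp add: field_simps)
  from order_tendstoD(2)[OF hi(1) this] show "\<forall>\<^sub>F N in sequentially. x N < y"
    by eventually_elim (use hi(2) in \<open>auto intro: le_less_trans\<close>)
qed

lemma weak_edgeworth0_bump_local_limit:
  assumes "weak_edgeworth0 M S sigma2" and "0 < sigma2"
    and "(\<lambda>N. v N / sqrt (real N)) \<longlonglongrightarrow> u" and "0 < e"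
  shows "(\<lambda>N. sqrt (real N) * (\<integral>\<omega>. bump c d e (S N \<omega> - v N) \<partial>M))
           \<longlonglongrightarrow> normal_dens sigma2 u * (\<integral>x. bump c d e x \<partial>lborel)"
  using assms isCont_bump'
  by (intro weak_edgeworth0_smooth_local_limit[where G'="bump' c d e"] bump_has_derivative
      integrable_bump integrable_bump' continuous_at_imp_continuous_on) auto

lemma prob_interval_bump_bounds:
  assumes "prob_space M" and [measurable]: "X \<in> borel_measurable M" and "0 < e"
  shows "(\<integral>\<omega>. bump a b e (X \<omega> - v) \<partial>M) \<le> measure M {\<omega> \<in> space M. X \<omega> \<in> {v + a<..<v + b}}"
    and "measure M {\<omega> \<in> space M. X \<omega> \<in> {v + a<..<v + b}} \<le> (\<integral>\<omega>. bump (a - e) (b + e) e (X \<omega> - v) \<partial>M)"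
proof -
  interpret prob_space M by fact
  have integrable: "integrable M (\<lambda>\<omega>. bump c d e (X \<omega> - v))" for c d
    using bump_nonneg bump_le_1 \<open>0 < e\<close> by (intro integrable_const_bound[where B=1]) auto
  have "measure M {\<omega> \<in> space M. X \<omega> \<in> {v + a<..<v + b}}
      = (\<integral>\<omega>. indicator {\<omega> \<in> space M. X \<omega> \<in> {v + a<..<v + b}} \<omega> \<partial>M)"
    by (simp add: Int_absorb2)
  also have "\<dots> = (\<integral>\<omega>. indicator {a<..<b} (X \<omega> - v) \<partial>M)"
    by (rule Bochner_Integration.integral_cong) (auto split: split_indicator)
  finally have "measure M {\<omega> \<in> space M. X \<omega> \<in> {v + a<..<v + b}}
      = (\<integral>\<omega>. indicator {a<..<b} (X \<omega> - v) \<partial>M)" .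
  moreover have "integrable M (\<lambda>\<omega>. indicator {a<..<b} (X \<omega> - v) :: real)"
    by (intro integrable_const_bound[where B=1]) auto
  ultimately show "(\<integral>\<omega>. bump a b e (X \<omega> - v) \<partial>M) \<le> measure M {\<omega> \<in> space M. X \<omega> \<in> {v + a<..<v + b}}"
    and "measure M {\<omega> \<in> space M. X \<omega> \<in> {v + a<..<v + b}} \<le> (\<integral>\<omega>. bump (a - e) (b + e) e (X \<omega> - v) \<partial>M)"
    using bump_le_indicator indicator_le_bump \<open>0 < e\<close> by (auto intro!: integral_mono integrable)
qed

lemma weak_edgeworth0_interval_local_limit:
  assumes "prob_space M" and "\<And>N. S N \<in> borel_measurable M"
    and "weak_edgeworth0 M S sigma2" and "0 < sigma2"
    and "(\<lambda>N. v N / sqrt (real N)) \<longlonglongrightarrow> u" and "a < b"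
  shows "(\<lambda>N. sqrt (real N) * measure M {\<omega> \<in> space M. S N \<omega> \<in> {v N + a<..<v N + b}})
           \<longlonglongrightarrow> normal_dens sigma2 u * (b - a)"
proof (rule tendsto_by_approximation)
  fix \<epsilon> :: real assume "0 < \<epsilon>"
  define L where "L = normal_dens sigma2 u"
  \<comment> \<open>the bumps change the interval length by 2e, which the limit weights by L\<close>
  define e where "e = \<epsilon> / (2 * L + 1)"
  have "0 \<le> L"
    using \<open>0 < sigma2\<close> by (simp add: L_def normal_dens_nonneg)
  then have "0 < e" and e_small: "2 * e * L \<le> \<epsilon>"
    using \<open>0 < \<epsilon>\<close> by (auto simp: e_def field_simps)
  have "L * (b - a) - \<epsilon> \<le> L * (\<integral>x. bump a b e x \<partial>lborel)"
    using mult_left_mono[OF bump_integral_ge[OF \<open>0 < e\<close>, of b a] \<open>0 \<le> L\<close>] e_small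
    by (simp add: algebra_simps)
  moreover have "L * (\<integral>x. bump (a - e) (b + e) e x \<partial>lborel) \<le> L * (b - a) + \<epsilon>"
    using mult_left_mono[OF bump_integral_le[OF \<open>0 < e\<close>, of "a - e" "b + e"] \<open>0 \<le> L\<close>]
      e_small \<open>a < b\<close> \<open>0 < e\<close>
    by (simp add: algebra_simps)
  moreover have "\<forall>N. sqrt (real N) * (\<integral>\<omega>. bump a b e (S N \<omega> - v N) \<partial>M)
        \<le> sqrt (real N) * measure M {\<omega> \<in> space M. S N \<omega> \<in> {v N + a<..<v N + b}}
      \<and> sqrt (real N) * measure M {\<omega> \<in> space M. S N \<omega> \<in> {v N + a<..<v N + b}}
        \<le> sqrt (real N) * (\<integral>\<omega>. bump (a - e) (b + e) e (S N \<omega> - v N) \<partial>M)"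
    using prob_interval_bump_bounds[OF assms(1,2) \<open>0 < e\<close>] by (simp add: mult_left_mono)
  ultimately show "\<exists>lo hi l h. lo \<longlonglongrightarrow> l \<and> hi \<longlonglongrightarrow> h
      \<and> (\<forall>N. lo N \<le> sqrt (real N) * measure M {\<omega> \<in> space M. S N \<omega> \<in> {v N + a<..<v N + b}}
             \<and> sqrt (real N) * measure M {\<omega> \<in> space M. S N \<omega> \<in> {v N + a<..<v N + b}} \<le> hi N)
      \<and> normal_dens sigma2 u * (b - a) - \<epsilon> \<le> l \<and> h \<le> normal_dens sigma2 u * (b - a) + \<epsilon>"
    using weak_edgeworth0_bump_local_limit[OF assms(3,4,5) \<open>0 < e\<close>] unfolding L_def by blast
qed

theorem corollary5p2:
  fixes M :: "'a measure" and X :: "nat \<Rightarrow> 'a \<Rightarrow> real" and S :: "nat \<Rightarrow> 'a \<Rightarrow> real"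
    and sigma2 :: real and uN :: "nat \<Rightarrow> real" and u a b :: real
  assumes "prob_space M"
    and meas: "\<And>n. X n \<in> borel_measurable M"
    and S_def: "\<And>N. S N = (\<lambda>\<omega>. \<Sum>n\<in>{1..N}. X n \<omega>)"
    and sigma_pos: "sigma2 > 0"
    and edgeworth: "\<exists>r :: nat \<Rightarrow> real. r \<longlonglongrightarrow> 0 \<and>
       (\<forall>f. F10 f \<longrightarrow> (\<forall>N\<ge>1.
          norm ((\<integral>\<omega>. f (S N \<omega>) \<partial>M)
                - (\<integral>z. complex_of_real (normal_dens sigma2 z) * f (z * sqrt (real N)) \<partial>lborel))
          \<le> C10 f * (r N / sqrt (real N))))"
    and u_lim: "(\<lambda>N. uN N / sqrt (real N)) \<longlonglongrightarrow> u"
    and ab: "a < b"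
  shows "(\<lambda>N. sqrt (real N) / (b - a) *
            measure M {\<omega> \<in> space M. S N \<omega> \<in> {uN N + a <..< uN N + b}})
         \<longlonglongrightarrow> normal_dens sigma2 u"
proof -
  have "S N \<in> borel_measurable M" for N
    unfolding S_def using meas by measurable
  moreover have "weak_edgeworth0 M S sigma2"
    using edgeworth unfolding weak_edgeworth0_def .
  ultimately have "(\<lambda>N. sqrt (real N) * measure M {\<omega> \<in> space M. S N \<omega> \<in> {uN N + a<..<uN N + b}})
      \<longlonglongrightarrow> normal_dens sigma2 u * (b - a)"
    using weak_edgeworth0_interval_local_limit[OF \<open>prob_space M\<close>] sigma_pos u_lim ab by blast
  from tendsto_divide[OF this tendsto_const, of "b - a"] show ?thesis
    using ab by simp
qed

end
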